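(* Let $G$ be a non-separable graph with subgraphs $G_1,G_2$ such that $V(G_1)\cap V(G_2)=\{u,v\}$ (two distinct vertices), $V(G_1)\cup V(G_2)=V(G)$, $E(G_1)\cap E(G_2)=\emptyset$ and $E(G_1)\cup E(G_2)=E(G)$. Then $$F(G,\lambda)=\frac{F(G_1+uv,\lambda)\,F(G_2+uv,\lambda)}{\lambda-1}+F(G_1,\lambda)F(G_2,\lambda).$$
   Context: Graphs are finite, undirected, possibly with loops and parallel edges. The flow polynomial $F(G,\lambda)$ is determined by: $F(G,\lambda)=1$ if $E(G)=\emptyset$; $F(G,\lambda)=0$ if $G$ has a bridge; multiplicative over disjoint unions; $F(G,\lambda)=(\lambda-1)F(G-e,\lambda)$ if $e$ is a loop; otherwise $F(G,\lambda)=F(G/e,\lambda)-F(G-e,\lambda)$ ($G/e$ = contraction of $e$). A graph is non-separable if it is connected, has no cut-vertex, and either has no loops or has exactly one vertex and one edge. $H+uv$ denotes the graph obtained from $H$ by adding a new edge joining $u$ and $v$. *)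

theory Defs
  imports "HOL-Library.Uprod" "HOL-Computational_Algebra.Polynomial"
begin

text \<open>Finite multigraphs with loops and parallel edges: a vertex set, an edge set and an
  endpoint map (an unordered pair; a loop has ends Upair x x). Only the values of ends on
  edges are meaningful.\<close>

record ('v, 'e) mgraph =
  verts :: "'v set"
  edges :: "'e set"
  ends  :: "'e \<Rightarrow> 'v uprod"

definition wf_graph :: "('v, 'e) mgraph \<Rightarrow> bool" where
  "wf_graph G \<longleftrightarrow> finite (verts G) \<and> finite (edges G) \<and>
     (\<forall>e\<in>edges G. set_uprod (ends G e) \<subseteq> verts G)"

definition is_loop :: "('v, 'e) mgraph \<Rightarrow> 'e \<Rightarrow> bool" where
  "is_loop G e \<longleftrightarrow> e \<in> edges G \<and> (\<exists>x. ends G e = Upair x x)"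

inductive reach :: "('v, 'e) mgraph \<Rightarrow> 'v \<Rightarrow> 'v \<Rightarrow> bool" for G where
  refl: "x \<in> verts G \<Longrightarrow> reach G x x"
| step: "reach G x y \<Longrightarrow> e \<in> edges G \<Longrightarrow> ends G e = Upair y z \<Longrightarrow> reach G x z"

definition del_edge :: "('v, 'e) mgraph \<Rightarrow> 'e \<Rightarrow> ('v, 'e) mgraph" where
  "del_edge G e = G\<lparr>edges := edges G - {e}\<rparr>"

definition del_vert :: "('v, 'e) mgraph \<Rightarrow> 'v \<Rightarrow> ('v, 'e) mgraph" where
  "del_vert G v = G\<lparr>verts := verts G - {v},
                    edges := {e \<in> edges G. v \<notin> set_uprod (ends G e)}\<rparr>"

definition add_edge :: "('v, 'e) mgraph \<Rightarrow> 'e \<Rightarrow> 'v \<Rightarrow> 'v \<Rightarrow> ('v, 'e) mgraph" where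
  "add_edge G e u v = G\<lparr>edges := insert e (edges G), ends := (ends G)(e := Upair u v)\<rparr>"

definition connected :: "('v, 'e) mgraph \<Rightarrow> bool" where
  "connected G \<longleftrightarrow> verts G \<noteq> {} \<and> (\<forall>x\<in>verts G. \<forall>y\<in>verts G. reach G x y)"

text \<open>A bridge: an edge whose deletion increases the number of components, i.e. its two
  ends are no longer joined by a path in \<open>G - e\<close>.\<close>
definition is_bridge :: "('v, 'e) mgraph \<Rightarrow> 'e \<Rightarrow> bool" where
  "is_bridge G e \<longleftrightarrow> e \<in> edges G \<and>
     (\<exists>x y. ends G e = Upair x y \<and> \<not> reach (del_edge G e) x y)"

definition has_bridge :: "('v, 'e) mgraph \<Rightarrow> bool" where
  "has_bridge G \<longleftrightarrow> (\<exists>e. is_bridge G e)"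

definition is_cut_vertex :: "('v, 'e) mgraph \<Rightarrow> 'v \<Rightarrow> bool" where
  "is_cut_vertex G v \<longleftrightarrow> v \<in> verts G \<and>
     (\<exists>x\<in>verts G - {v}. \<exists>y\<in>verts G - {v}. \<not> reach (del_vert G v) x y)"

definition non_separable :: "('v, 'e) mgraph \<Rightarrow> bool" where
  "non_separable G \<longleftrightarrow> connected G \<and> (\<forall>v. \<not> is_cut_vertex G v) \<and>
     ((\<forall>e. \<not> is_loop G e) \<or> (card (verts G) = 1 \<and> card (edges G) = 1))"

text \<open>\<open>H\<close> is (up to the irrelevant values of ends off the edge set) the contraction \<open>G/e\<close>
  of the non-loop edge \<open>e\<close> with ends \<open>u, v\<close>: \<open>v\<close> is merged into \<open>u\<close>.\<close>
definition is_contraction :: "('v, 'e) mgraph \<Rightarrow> 'e \<Rightarrow> ('v, 'e) mgraph \<Rightarrow> bool" where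
  "is_contraction G e H \<longleftrightarrow> e \<in> edges G \<and>
     (\<exists>u v. u \<noteq> v \<and> ends G e = Upair u v \<and> verts H = verts G - {v} \<and>
        edges H = edges G - {e} \<and>
        (\<forall>f\<in>edges H. ends H f = map_uprod (\<lambda>w. if w = v then u else w) (ends G f)))"

definition is_deletion :: "('v, 'e) mgraph \<Rightarrow> 'e \<Rightarrow> ('v, 'e) mgraph \<Rightarrow> bool" where
  "is_deletion G e H \<longleftrightarrow> e \<in> edges G \<and> verts H = verts G \<and> edges H = edges G - {e} \<and>
     (\<forall>f\<in>edges H. ends H f = ends G f)"

definition is_disjoint_union ::
  "('v, 'e) mgraph \<Rightarrow> ('v, 'e) mgraph \<Rightarrow> ('v, 'e) mgraph \<Rightarrow> bool" where
  "is_disjoint_union G G1 G2 \<longleftrightarrow> wf_graph G1 \<and> wf_graph G2 \<and>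
     verts G = verts G1 \<union> verts G2 \<and> verts G1 \<inter> verts G2 = {} \<and>
     edges G = edges G1 \<union> edges G2 \<and> edges G1 \<inter> edges G2 = {} \<and>
     (\<forall>f\<in>edges G1. ends G f = ends G1 f) \<and> (\<forall>f\<in>edges G2. ends G f = ends G2 f)"

inductive flow_rel :: "('v, 'e) mgraph \<Rightarrow> real poly \<Rightarrow> bool" where
  empty: "wf_graph G \<Longrightarrow> edges G = {} \<Longrightarrow> flow_rel G 1"
| bridge: "wf_graph G \<Longrightarrow> has_bridge G \<Longrightarrow> flow_rel G 0"
| union: "wf_graph G \<Longrightarrow> is_disjoint_union G G1 G2 \<Longrightarrow> flow_rel G1 p1 \<Longrightarrow>
            flow_rel G2 p2 \<Longrightarrow> flow_rel G (p1 * p2)"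
| loop: "wf_graph G \<Longrightarrow> is_loop G e \<Longrightarrow> is_deletion G e H \<Longrightarrow> flow_rel H p \<Longrightarrow>
            flow_rel G ([:-1, 1:] * p)"
| delcon: "wf_graph G \<Longrightarrow> \<not> has_bridge G \<Longrightarrow> e \<in> edges G \<Longrightarrow> \<not> is_loop G e \<Longrightarrow>
            is_contraction G e H1 \<Longrightarrow> is_deletion G e H2 \<Longrightarrow>
            flow_rel H1 p1 \<Longrightarrow> flow_rel H2 p2 \<Longrightarrow> flow_rel G (p1 - p2)"

definition flow_poly :: "('v, 'e) mgraph \<Rightarrow> real poly" where
  "flow_poly G = (THE p. flow_rel G p)"

definition is_subgraph :: "('v, 'e) mgraph \<Rightarrow> ('v, 'e) mgraph \<Rightarrow> bool" where
  "is_subgraph H G \<longleftrightarrow> wf_graph H \<and> verts H \<subseteq> verts G \<and> edges H \<subseteq> edges G \<and>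
     (\<forall>f\<in>edges H. ends H f = ends G f)"

end

theory Submission
  imports Defs
begin

text \<open>Write \<open>k(A)\<close> for the number of components of the spanning subgraph \<open>(V, A)\<close>. The sum
  \<open>\<Sum>A\<subseteq>E. (-1)^|E - A| x^(|A| - |V| + k(A))\<close> satisfies every rule defining \<open>flow_rel\<close>,
  so it agrees with the flow polynomial at every \<open>x \<noteq> 0\<close> and the flow polynomial is
  well defined. For a separation of \<open>G\<close> at \<open>{u, v}\<close>, a subset \<open>A = A1 \<union> A2\<close> satisfies
  \<open>k(A) + 2 = k1(A1) + k2(A2) + [A1 and A2 both join u to v]\<close>, so the term of \<open>A\<close> is the
  product of the terms of \<open>A1\<close> and \<open>A2\<close>, times \<open>x\<close> exactly when both halves join \<open>u\<close> to \<open>v\<close>.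
  Adding the edge \<open>uv\<close> to \<open>G\<^sub>i\<close> turns its sum into \<open>(x - 1)\<close> times the partial sum over
  those \<open>A\<^sub>i\<close> that join \<open>u\<close> to \<open>v\<close>, and comparing both sides gives the identity.\<close>

section \<open>Reachability in spanning subgraphs\<close>

definition ends_in_verts :: "('v, 'e) mgraph \<Rightarrow> bool" where
  "ends_in_verts G \<longleftrightarrow> (\<forall>e\<in>edges G. set_uprod (ends G e) \<subseteq> verts G)"

definition spanning :: "('v, 'e) mgraph \<Rightarrow> 'e set \<Rightarrow> ('v, 'e) mgraph" where
  "spanning G A = G\<lparr>edges := A\<rparr>"

lemma spanning_simps [simp]:
  "verts (spanning G A) = verts G" "edges (spanning G A) = A" "ends (spanning G A) = ends G"
  by (simp_all add: spanning_def)

lemma ends_in_verts_spanning: "ends_in_verts G \<Longrightarrow> A \<subseteq> edges G \<Longrightarrow> ends_in_verts (spanning G A)"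
  by (auto simp: ends_in_verts_def)

lemma wf_graph_ends_in_verts: "wf_graph G \<Longrightarrow> ends_in_verts G"
  unfolding wf_graph_def ends_in_verts_def by blast

lemma wf_graph_ends_in_verts_spanning: "wf_graph G \<Longrightarrow> A \<subseteq> edges G \<Longrightarrow> ends_in_verts (spanning G A)"
  using ends_in_verts_spanning wf_graph_ends_in_verts by blast

lemma reach_end_in_verts: "reach G x y \<Longrightarrow> ends_in_verts G \<Longrightarrow> y \<in> verts G"
  by (induction rule: reach.induct) (auto simp: ends_in_verts_def)

lemma reach_trans: "reach G y z \<Longrightarrow> reach G x y \<Longrightarrow> reach G x z"
  by (induction rule: reach.induct) (auto intro: reach.step)

lemma reach_step_backward: "reach G x y \<Longrightarrow> e \<in> edges G \<Longrightarrow> ends G e = Upair z y \<Longrightarrow> reach G x z"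
  by (metis Upair_inject reach.step)

lemma reach_sym: "reach G x y \<Longrightarrow> ends_in_verts G \<Longrightarrow> reach G y x"
proof (induction rule: reach.induct)
  case (refl x)
  then show ?case by (auto intro: reach.refl)
next
  case (step x y e z)
  have "z \<in> verts G" using step.prems step.hyps(2,3) unfolding ends_in_verts_def by fastforce
  then have "reach G z y" by (rule reach_step_backward[OF reach.refl step.hyps(2,3)])
  then show ?case using reach_trans[OF step.IH[OF step.prems]] by blast
qed

lemma reach_mono:
  "reach G x y \<Longrightarrow> verts G \<subseteq> verts H \<Longrightarrow>
    (\<forall>f\<in>edges G. f \<in> edges H \<and> ends H f = ends G f) \<Longrightarrow> reach H x y"
  by (induction rule: reach.induct) (auto intro: reach.intros)

lemma reach_spanning_mono: "reach (spanning G A) x y \<Longrightarrow> A \<subseteq> B \<Longrightarrow> reach (spanning G B) x y"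
  by (erule reach_mono) auto

lemma reach_spanning_no_edges: "reach (spanning G {}) x y \<longleftrightarrow> x = y \<and> x \<in> verts G"
proof
  show "reach (spanning G {}) x y \<Longrightarrow> x = y \<and> x \<in> verts G"
    by (induction rule: reach.induct) auto
qed (auto intro: reach.refl)

lemma reach_stays_in_closed_subgraph:
  "reach G x y \<Longrightarrow> x \<in> verts H \<Longrightarrow> ends_in_verts H \<Longrightarrow>
    (\<forall>f\<in>edges G. set_uprod (ends G f) \<inter> verts H \<noteq> {} \<longrightarrow> f \<in> edges H \<and> ends H f = ends G f)
   \<Longrightarrow> reach H x y"
proof (induction rule: reach.induct)
  case (refl x)
  then show ?case by (simp add: reach.refl)
next
  case (step x y e z)
  have r: "reach H x y" using step.IH[OF step.prems] .
  have "y \<in> verts H" using reach_end_in_verts[OF r step.prems(2)] .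
  then have "set_uprod (ends G e) \<inter> verts H \<noteq> {}" using step.hyps(3) by auto
  then have "e \<in> edges H \<and> ends H e = ends G e" using step.prems(3) step.hyps(2) by blast
  then show ?case using reach.step[OF r, of e z] step.hyps(3) by simp
qed

lemma reach_spanning_insert:
  assumes "ends_in_verts (spanning G A)" "ends G e = Upair a b" "a \<in> verts G" "b \<in> verts G"
  shows "reach (spanning G (insert e A)) x y \<longleftrightarrow> reach (spanning G A) x y \<or>
    (reach (spanning G A) x a \<and> reach (spanning G A) b y) \<or>
    (reach (spanning G A) x b \<and> reach (spanning G A) a y)"
    (is "?L \<longleftrightarrow> ?R")
proof
  assume ?L
  then show ?R
  proof (induction rule: reach.induct)
    case (refl x)
    then show ?case by (auto intro: reach.refl)
  next
    case (step x y f z)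
    show ?case
    proof (cases "f \<in> A")
      case True
      then show ?thesis using step.IH step.hyps(3) by (auto intro: reach.step)
    next
      case False
      then have "f = e" using step by auto
      then have "(y = a \<and> z = b) \<or> (y = b \<and> z = a)" using step.hyps(3) assms(2) by auto
      moreover have "reach (spanning G A) a a" "reach (spanning G A) b b"
        using assms by (auto intro: reach.refl)
      ultimately show ?thesis using step.IH reach_sym[OF _ assms(1)] by metis
    qed
  qed
next
  have ab: "reach (spanning G (insert e A)) a b" "reach (spanning G (insert e A)) b a"
    using assms by (auto intro!: reach.step[OF reach.refl] reach_step_backward[OF reach.refl])
  have mono: "reach (spanning G A) p q \<Longrightarrow> reach (spanning G (insert e A)) p q" for p q
    by (erule reach_spanning_mono) auto
  assume ?R
  then show ?L
    using reach_trans[OF mono reach_trans[OF ab(1) mono]]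
      reach_trans[OF mono reach_trans[OF ab(2) mono]] mono by blast
qed

section \<open>Counting components\<close>

definition num_components :: "('v, 'e) mgraph \<Rightarrow> 'e set \<Rightarrow> nat" where
  "num_components G A = card ((\<lambda>z. {w. reach (spanning G A) z w}) ` verts G)"

lemma num_components_no_edges: "finite (verts G) \<Longrightarrow> num_components G {} = card (verts G)"
  unfolding num_components_def reach_spanning_no_edges
  by (subst card_image) (auto intro: inj_onI)

lemma card_classes_merge:
  fixes R :: "'a \<Rightarrow> 'a \<Rightarrow> bool"
  assumes fin: "finite V" and a: "a \<in> V" and b: "b \<in> V" and ab: "\<not> R a b"
    and refl: "\<And>x. x \<in> V \<Longrightarrow> R x x"
    and sym: "\<And>x y. R x y \<Longrightarrow> R y x" and trans: "\<And>x y z. R x y \<Longrightarrow> R y z \<Longrightarrow> R x z"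
  defines "R' x y \<equiv> R x y \<or> (R x a \<and> R b y) \<or> (R x b \<and> R a y)"
  shows "card ((\<lambda>z. {w. R z w}) ` V) = Suc (card ((\<lambda>z. {w. R' z w}) ` V))"
proof -
  define c where "c z = {w. R z w}" for z
  define T where "T = c ` (V - (c a \<union> c b))"
  have c_eq: "z \<in> c y \<Longrightarrow> c z = c y" for z y
    unfolding c_def using sym trans by blast
  have merged: "{w. R' z w} = (if z \<in> c a \<union> c b then c a \<union> c b else c z)" for z
  proof (cases "z \<in> c a \<union> c b")
    case True
    then have "R' z w \<longleftrightarrow> R a w \<or> R b w" for w
      unfolding R'_def c_def using ab sym trans by blast
    then show ?thesis using True unfolding c_def by auto
  next
    case False
    then have "\<not> R z a" "\<not> R z b" using sym unfolding c_def by auto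
    then show ?thesis using False unfolding R'_def c_def by auto
  qed
  have aa: "a \<in> c a" "b \<in> c b" unfolding c_def using a b refl by auto
  have new: "(\<lambda>z. {w. R' z w}) ` V = insert (c a \<union> c b) T"
    unfolding merged T_def using a aa by (auto simp: image_def)
  have old: "(\<lambda>z. {w. R z w}) ` V = insert (c a) (insert (c b) T)"
    unfolding c_def[symmetric] T_def using a b c_eq by blast
  have not_in_T: "X \<notin> T" if "a \<in> X \<or> b \<in> X" for X
    using that sym unfolding T_def c_def by auto
  have "c a \<noteq> c b" using ab aa unfolding c_def by auto
  moreover have "c a \<notin> T" "c b \<notin> T" "c a \<union> c b \<notin> T" using not_in_T aa by auto
  moreover have "finite T" unfolding T_def using fin by simp
  ultimately show ?thesis unfolding new old by (simp add: card_insert_if)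
qed

lemma card_image_eq_kernel:
  assumes "\<And>z z'. z \<in> V \<Longrightarrow> z' \<in> V \<Longrightarrow> f z = f z' \<longleftrightarrow> g z = g z'"
  shows "card (f ` V) = card (g ` V)"
proof -
  define h where "h y = g (inv_into V f y)" for y
  have inv: "y \<in> f ` V \<Longrightarrow> inv_into V f y \<in> V \<and> f (inv_into V f y) = y" for y
    by (simp add: inv_into_into f_inv_into_f)
  have "inj_on h (f ` V)"
  proof
    fix y1 y2 assume y: "y1 \<in> f ` V" "y2 \<in> f ` V" "h y1 = h y2"
    then show "y1 = y2" using inv[OF y(1)] inv[OF y(2)] assms unfolding h_def by metis
  qed
  moreover have "h (f z) = g z" if "z \<in> V" for z
    using assms inv that unfolding h_def by blast
  then have "h ` f ` V = g ` V" by (force simp: image_comp)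
  ultimately show ?thesis using card_image by fastforce
qed

lemma reach_class_eq_iff:
  assumes "ends_in_verts G" "z' \<in> verts G"
  shows "{w. reach G z w} = {w. reach G z' w} \<longleftrightarrow> reach G z z'"
proof
  assume "{w. reach G z w} = {w. reach G z' w}"
  then show "reach G z z'" using reach.refl[OF assms(2)] by blast
next
  assume "reach G z z'"
  then have "reach G z w \<longleftrightarrow> reach G z' w" for w
    using reach_trans[of G z' w z] reach_trans[of G z w z'] reach_sym[OF _ assms(1)] by blast
  then show "{w. reach G z w} = {w. reach G z' w}" by blast
qed

lemma num_components_map:
  assumes "ends_in_verts (spanning G A)" "ends_in_verts (spanning H B)" "\<mu> ` verts G = verts H"
    and "\<And>p q. p \<in> verts G \<Longrightarrow> q \<in> verts G \<Longrightarrow>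
      reach (spanning G A) p q \<longleftrightarrow> reach (spanning H B) (\<mu> p) (\<mu> q)"
  shows "num_components G A = num_components H B"
proof -
  have "card ((\<lambda>z. {w. reach (spanning G A) z w}) ` verts G) =
        card ((\<lambda>z. {w. reach (spanning H B) (\<mu> z) w}) ` verts G)"
  proof (rule card_image_eq_kernel)
    fix z z' assume z: "z \<in> verts G" "z' \<in> verts G"
    then have "\<mu> z' \<in> verts H" using assms(3) by auto
    then show "({w. reach (spanning G A) z w} = {w. reach (spanning G A) z' w}) =
        ({w. reach (spanning H B) (\<mu> z) w} = {w. reach (spanning H B) (\<mu> z') w})"
      using reach_class_eq_iff[OF assms(1), of z' z] reach_class_eq_iff[OF assms(2), of "\<mu> z'" "\<mu> z"]
        assms(4)[OF z] z by simp
  qed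
  also have "\<dots> = card ((\<lambda>z. {w. reach (spanning H B) z w}) ` verts H)"
    unfolding assms(3)[symmetric] by (simp add: image_image)
  finally show ?thesis unfolding num_components_def .
qed

lemma num_components_insert:
  assumes G: "ends_in_verts G" and A: "A \<subseteq> edges G" and e: "e \<in> edges G"
    and ab: "ends G e = Upair a b" and fin: "finite (verts G)"
  shows "int (num_components G (insert e A)) =
    int (num_components G A) - (if reach (spanning G A) a b then 0 else 1)"
proof -
  have ab_verts: "a \<in> verts G" "b \<in> verts G" using G e ab by (auto simp: ends_in_verts_def)
  have GA: "ends_in_verts (spanning G A)" using ends_in_verts_spanning[OF G A] .
  define R where "R = reach (spanning G A)"
  have sym: "R x y \<Longrightarrow> R y x" for x y unfolding R_def using reach_sym[OF _ GA] .
  have trans: "R x y \<Longrightarrow> R y z \<Longrightarrow> R x z" for x y z unfolding R_def using reach_trans by metis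
  have insert_iff: "reach (spanning G (insert e A)) x y \<longleftrightarrow>
      R x y \<or> (R x a \<and> R b y) \<or> (R x b \<and> R a y)" for x y
    unfolding R_def using reach_spanning_insert[OF GA ab ab_verts] .
  show ?thesis
  proof (cases "R a b")
    case True
    then have "reach (spanning G (insert e A)) x y \<longleftrightarrow> R x y" for x y
      unfolding insert_iff using sym trans by metis
    then have "num_components G (insert e A) = num_components G A"
      unfolding num_components_def R_def by presburger
    then show ?thesis using True unfolding R_def by simp
  next
    case False
    have "num_components G A = Suc (num_components G (insert e A))"
      unfolding num_components_def insert_iff R_def[symmetric]
      by (rule card_classes_merge[of "verts G" a b R, OF fin ab_verts False _ sym trans]) (simp add: R_def reach.refl)
    then show ?thesis using False unfolding R_def by simp
  qed
qed

lemma num_components_cong: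
  assumes "ends_in_verts (spanning G A)" "verts G = verts H" "\<forall>f\<in>A. ends G f = ends H f"
  shows "num_components G A = num_components H A"
proof (rule num_components_map[OF assms(1) _ _, of H A id])
  show "ends_in_verts (spanning H A)" using assms unfolding ends_in_verts_def by auto
  fix p q
  have "reach (spanning G A) p q \<Longrightarrow> reach (spanning H A) p q"
    "reach (spanning H A) p q \<Longrightarrow> reach (spanning G A) p q"
    by (erule reach_mono, use assms in auto)+
  then show "reach (spanning G A) p q = reach (spanning H A) (id p) (id q)" by auto
qed (use assms in auto)

section \<open>The subset expansion\<close>

lemma sum_Pow_insert:
  assumes "finite E" "e \<notin> E"
  shows "sum f (Pow (insert e E)) = sum f (Pow E) + sum (\<lambda>A. f (insert e A)) (Pow E)"
proof -
  have "Pow E \<inter> insert e ` Pow E = {}" using assms by auto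
  moreover have "inj_on (insert e) (Pow E)"
    using assms(2) by (intro inj_onI) (metis Diff_insert_absorb PowD subsetD)
  ultimately show ?thesis unfolding Pow_insert
    using sum.union_disjoint[of "Pow E" "insert e ` Pow E" f] sum.reindex[of "insert e" "Pow E" f] assms
    by simp
qed

lemma sum_Pow_Un:
  assumes "finite E1" "finite E2" "E1 \<inter> E2 = {}"
  shows "(\<Sum>A\<in>Pow (E1 \<union> E2). f A) = (\<Sum>A1\<in>Pow E1. \<Sum>A2\<in>Pow E2. f (A1 \<union> A2))"
proof -
  have inj: "inj_on (\<lambda>(A1, A2). A1 \<union> A2) (Pow E1 \<times> Pow E2)"
  proof (rule inj_onI, clarify)
    fix A1 A2 B1 B2
    assume "A1 \<subseteq> E1" "A2 \<subseteq> E2" "B1 \<subseteq> E1" "B2 \<subseteq> E2" "A1 \<union> A2 = B1 \<union> B2"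
    then show "A1 = B1 \<and> A2 = B2" using assms(3) by blast
  qed
  have "Pow (E1 \<union> E2) = (\<lambda>(A1, A2). A1 \<union> A2) ` (Pow E1 \<times> Pow E2)"
  proof
    show "Pow (E1 \<union> E2) \<subseteq> (\<lambda>(A1, A2). A1 \<union> A2) ` (Pow E1 \<times> Pow E2)"
    proof
      fix A assume "A \<in> Pow (E1 \<union> E2)"
      then have "A = (\<lambda>(A1, A2). A1 \<union> A2) (A \<inter> E1, A \<inter> E2)" "(A \<inter> E1, A \<inter> E2) \<in> Pow E1 \<times> Pow E2"
        by auto
      then show "A \<in> (\<lambda>(A1, A2). A1 \<union> A2) ` (Pow E1 \<times> Pow E2)" by blast
    qed
  qed auto
  then have "(\<Sum>A\<in>Pow (E1 \<union> E2). f A) = (\<Sum>p\<in>Pow E1 \<times> Pow E2. f ((\<lambda>(A1, A2). A1 \<union> A2) p))"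
    using sum.reindex[OF inj, of f] by simp
  also have "\<dots> = (\<Sum>A1\<in>Pow E1. \<Sum>A2\<in>Pow E2. f (A1 \<union> A2))"
    by (simp add: sum.cartesian_product case_prod_beta)
  finally show ?thesis .
qed

lemma card_diff_insert_Suc:
  assumes "finite E" "e \<in> E" "A \<subseteq> E - {e}"
  shows "card (E - A) = Suc (card (E - {e} - A))" "card (E - insert e A) = card (E - {e} - A)"
proof -
  have "E - A = insert e (E - {e} - A)" using assms by auto
  then show "card (E - A) = Suc (card (E - {e} - A))" using assms by simp
  have "E - insert e A = E - {e} - A" by auto
  then show "card (E - insert e A) = card (E - {e} - A)" by simp
qed

text \<open>The monomial \<open>x^(|A| - |V| + k(A))\<close> is written as a quotient to avoid arguing that the
  exponent is nonnegative; this is why \<open>x \<noteq> 0\<close> is assumed throughout.\<close>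
definition flow_term :: "('v, 'e) mgraph \<Rightarrow> 'e set \<Rightarrow> real \<Rightarrow> real" where
  "flow_term G A x =
     (-1) ^ card (edges G - A) * x ^ card A * x ^ num_components G A / x ^ card (verts G)"

definition flow_sum :: "('v, 'e) mgraph \<Rightarrow> real \<Rightarrow> real" where
  "flow_sum G x = (\<Sum>A\<in>Pow (edges G). flow_term G A x)"

lemma flow_sum_no_edges:
  assumes "wf_graph G" "edges G = {}" "x \<noteq> 0"
  shows "flow_sum G x = 1"
  using assms num_components_no_edges[of G] unfolding flow_sum_def flow_term_def wf_graph_def by simp

lemma flow_sum_split_edge:
  assumes "wf_graph G" "e \<in> edges G"
  shows "flow_sum G x =
    (\<Sum>A\<in>Pow (edges G - {e}). flow_term G A x) + (\<Sum>A\<in>Pow (edges G - {e}). flow_term G (insert e A) x)"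
proof -
  have "edges G = insert e (edges G - {e})" using assms by auto
  moreover have "finite (edges G - {e})" using assms unfolding wf_graph_def by auto
  ultimately show ?thesis unfolding flow_sum_def
    using sum_Pow_insert[of "edges G - {e}" e "\<lambda>A. flow_term G A x"] by simp
qed

lemma flow_term_insert:
  assumes G: "wf_graph G" and e: "e \<in> edges G" and ab: "ends G e = Upair a b"
    and A: "A \<subseteq> edges G - {e}" and x: "x \<noteq> 0"
  shows "flow_term G (insert e A) x = (if reach (spanning G A) a b then - x else - 1) * flow_term G A x"
proof -
  have fin: "finite (edges G)" "finite (verts G)" using G unfolding wf_graph_def by auto
  have k: "int (num_components G (insert e A)) =
      int (num_components G A) - (if reach (spanning G A) a b then 0 else 1)"
    using num_components_insert[OF wf_graph_ends_in_verts[OF G] _ e ab fin(2)] A by blast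
  have "finite A" "e \<notin> A" using A fin finite_subset by auto
  then have card_A: "card (insert e A) = Suc (card A)" by simp
  note card_E = card_diff_insert_Suc[OF fin(1) e A]
  show ?thesis
  proof (cases "reach (spanning G A) a b")
    case True
    then have "num_components G (insert e A) = num_components G A" using k by simp
    then show ?thesis using True card_A card_E unfolding flow_term_def by simp
  next
    case False
    then have "num_components G A = Suc (num_components G (insert e A))" using k by simp
    then show ?thesis using False card_A card_E x unfolding flow_term_def by (simp add: field_simps)
  qed
qed

lemma flow_term_deletion:
  assumes G: "wf_graph G" and H: "is_deletion G e H" and A: "A \<subseteq> edges G - {e}"
  shows "flow_term G A x = - flow_term H A x"
proof -
  have e: "e \<in> edges G" "verts H = verts G" "edges H = edges G - {e}"
    and ends_H: "\<forall>f\<in>edges H. ends H f = ends G f"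
    using H unfolding is_deletion_def by auto
  have fin: "finite (edges G)" using G unfolding wf_graph_def by auto
  have "\<forall>f\<in>A. ends G f = ends H f"
  proof
    fix f assume "f \<in> A"
    then have "f \<in> edges H" using A e(3) by blast
    then show "ends G f = ends H f" using ends_H by simp
  qed
  then have "num_components G A = num_components H A"
    using num_components_cong[OF wf_graph_ends_in_verts_spanning[OF G, of A] e(2)[symmetric]] A
    by blast
  moreover have "card (edges G - A) = Suc (card (edges H - A))"
    using card_diff_insert_Suc(1)[OF fin e(1) A] unfolding e(3) .
  ultimately show ?thesis unfolding flow_term_def e(2) by simp
qed

lemma sum_flow_term_deletion:
  assumes "wf_graph G" "is_deletion G e H"
  shows "(\<Sum>A\<in>Pow (edges G - {e}). flow_term G A x) = - flow_sum H x"
proof -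
  have "edges H = edges G - {e}" using assms(2) unfolding is_deletion_def by auto
  then show ?thesis
    unfolding flow_sum_def sum_negf[symmetric] using flow_term_deletion[OF assms] by (auto intro: sum.cong)
qed

lemma flow_sum_loop:
  assumes G: "wf_graph G" and l: "is_loop G e" and H: "is_deletion G e H" and x: "x \<noteq> 0"
  shows "flow_sum G x = (x - 1) * flow_sum H x"
proof -
  obtain a where e: "e \<in> edges G" "ends G e = Upair a a" using l unfolding is_loop_def by auto
  have "a \<in> verts G" using G e unfolding wf_graph_def by auto
  then have "flow_term G (insert e A) x = - x * flow_term G A x" if "A \<subseteq> edges G - {e}" for A
    using flow_term_insert[OF G e that x] by (simp add: reach.refl)
  then have "(\<Sum>A\<in>Pow (edges G - {e}). flow_term G (insert e A) x) =
      - x * (\<Sum>A\<in>Pow (edges G - {e}). flow_term G A x)"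
    by (simp add: sum_distrib_left sum_negf[symmetric])
  then show ?thesis
    unfolding flow_sum_split_edge[OF G e(1)] sum_flow_term_deletion[OF G H] by (simp add: algebra_simps)
qed

lemma flow_sum_bridge:
  assumes G: "wf_graph G" and b: "has_bridge G" and x: "x \<noteq> 0"
  shows "flow_sum G x = 0"
proof -
  obtain e a b where e: "e \<in> edges G" "ends G e = Upair a b" and no_path: "\<not> reach (del_edge G e) a b"
    using b unfolding has_bridge_def is_bridge_def by auto
  have "flow_term G (insert e A) x = - flow_term G A x" if A: "A \<subseteq> edges G - {e}" for A
  proof -
    have "\<not> reach (spanning G A) a b"
      using no_path reach_mono[of "spanning G A" a b "del_edge G e"] A by (auto simp: del_edge_def)
    then show ?thesis using flow_term_insert[OF G e A x] by simp
  qed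
  then have "(\<Sum>A\<in>Pow (edges G - {e}). flow_term G (insert e A) x) =
      - (\<Sum>A\<in>Pow (edges G - {e}). flow_term G A x)"
    by (simp add: sum_negf[symmetric])
  then show ?thesis unfolding flow_sum_split_edge[OF G e(1)] by simp
qed

lemma reach_contracted_edge:
  assumes "ends G e = Upair u v" "e \<in> edges G" "a \<in> verts G" "b \<in> verts G"
    and "(if a = v then u else a) = (if b = v then u else b)"
  shows "reach (spanning G (insert e A)) a b"
proof (cases "a = b")
  case True
  then show ?thesis using assms by (auto intro: reach.refl)
next
  case False
  then have "(a = u \<and> b = v) \<or> (a = v \<and> b = u)" using assms(5) by (auto split: if_splits)
  then show ?thesis
  proof
    assume "a = u \<and> b = v"
    then show ?thesis using reach.step[OF reach.refl[of a "spanning G (insert e A)"], of e b] assms by simp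
  next
    assume "a = v \<and> b = u"
    then show ?thesis
      using reach_step_backward[OF reach.refl[of a "spanning G (insert e A)"], of e b] assms by simp
  qed
qed

lemma reach_contraction_forward:
  assumes ends_e: "ends G e = Upair u v" and uv: "u \<noteq> v" and u: "u \<in> verts G"
    and verts_H: "verts H = verts G - {v}"
    and ends_H: "\<forall>f\<in>A. ends H f = map_uprod (\<lambda>w. if w = v then u else w) (ends G f)"
    and r: "reach (spanning G (insert e A)) p q"
  shows "reach (spanning H A) (if p = v then u else p) (if q = v then u else q)"
  using r
proof (induction rule: reach.induct)
  case (refl x)
  then have "(if x = v then u else x) \<in> verts H" using verts_H u uv by auto
  then show ?case by (intro reach.refl) simp
next
  case (step x y f z)
  show ?case
  proof (cases "f = e")
    case True
    then have "Upair y z = Upair u v" using step.hyps(3) ends_e by (simp del: Upair_inject)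
    then have "(if z = v then u else z) = (if y = v then u else y)" using uv by auto
    then show ?thesis using step.IH by simp
  next
    case False
    then have f: "f \<in> A" using step.hyps(2) by simp
    then have "ends H f = Upair (if y = v then u else y) (if z = v then u else z)"
      using ends_H step.hyps(3) by simp
    then show ?thesis using reach.step[OF step.IH, of f] f by simp
  qed
qed

lemma reach_contraction_backward:
  assumes G: "ends_in_verts G" and ends_e: "ends G e = Upair u v" and e: "e \<in> edges G"
    and A: "A \<subseteq> edges G"
    and ends_H: "\<forall>f\<in>A. ends H f = map_uprod (\<lambda>w. if w = v then u else w) (ends G f)"
    and r: "reach (spanning H A) p' q'" and p: "p \<in> verts G"
  shows "(if p = v then u else p) = p' \<longrightarrow>
    (\<forall>q\<in>verts G. (if q = v then u else q) = q' \<longrightarrow> reach (spanning G (insert e A)) p q)"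
  using r
proof (induction rule: reach.induct)
  case (refl x)
  show ?case using reach_contracted_edge[OF ends_e e p] by auto
next
  case (step x y f z)
  have f: "f \<in> A" using step.hyps(2) by simp
  obtain c d where cd: "ends G f = Upair c d" by (cases "ends G f") auto
  have "set_uprod (ends G f) \<subseteq> verts G" using G f A unfolding ends_in_verts_def by blast
  then have cd_verts: "c \<in> verts G" "d \<in> verts G" using cd by auto
  have "Upair (if c = v then u else c) (if d = v then u else d) = Upair y z"
    using ends_H f cd step.hyps(3) by simp
  then consider "(if c = v then u else c) = y" "(if d = v then u else d) = z"
    | "(if d = v then u else d) = y" "(if c = v then u else c) = z"
    unfolding Upair_inject by blast
  note cases = this
  have f_edge: "f \<in> edges (spanning G (insert e A))" "ends (spanning G (insert e A)) f = Upair c d"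
    using f cd by auto
  show ?case
  proof (intro ballI impI)
    assume p_x: "(if p = v then u else p) = x"
    fix q assume q: "q \<in> verts G" "(if q = v then u else q) = z"
    show "reach (spanning G (insert e A)) p q"
    proof (cases rule: cases)
      case 1
      then have "reach (spanning G (insert e A)) p c"
        using step.IH[rule_format, OF p_x cd_verts(1)] by blast
      then have p_d: "reach (spanning G (insert e A)) p d" by (rule reach.step[OF _ f_edge])
      have "reach (spanning G (insert e A)) d q"
        using reach_contracted_edge[OF ends_e e cd_verts(2) q(1)] 1 q(2) by simp
      then show ?thesis using p_d by (rule reach_trans)
    next
      case 2
      then have "reach (spanning G (insert e A)) p d"
        using step.IH[rule_format, OF p_x cd_verts(2)] by blast
      then have p_c: "reach (spanning G (insert e A)) p c" by (rule reach_step_backward[OF _ f_edge])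
      have "reach (spanning G (insert e A)) c q"
        using reach_contracted_edge[OF ends_e e cd_verts(1) q(1)] 2 q(2) by simp
      then show ?thesis using p_c by (rule reach_trans)
    qed
  qed
qed

lemma num_components_contraction:
  assumes G: "wf_graph G" and H: "is_contraction G e H" and A: "A \<subseteq> edges G - {e}"
  shows "num_components G (insert e A) = num_components H A"
proof -
  obtain u v where e: "e \<in> edges G" and uv: "u \<noteq> v" and ends_e: "ends G e = Upair u v"
    and verts_H: "verts H = verts G - {v}" and edges_H: "edges H = edges G - {e}"
    and ends_H: "\<forall>f\<in>edges H. ends H f = map_uprod (\<lambda>w. if w = v then u else w) (ends G f)"
    using H unfolding is_contraction_def by blast
  define \<mu> where "\<mu> = (\<lambda>w. if w = v then u else w)"
  have ends_G: "ends_in_verts G" using wf_graph_ends_in_verts[OF G] .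
  have u: "u \<in> verts G" using ends_G e ends_e unfolding ends_in_verts_def by auto
  have image: "\<mu> ` verts G = verts H"
  proof
    show "\<mu> ` verts G \<subseteq> verts H" unfolding verts_H \<mu>_def using u uv by auto
    show "verts H \<subseteq> \<mu> ` verts G"
    proof
      fix w assume "w \<in> verts H"
      then have "w \<in> verts G" "\<mu> w = w" unfolding verts_H \<mu>_def by auto
      then show "w \<in> \<mu> ` verts G" by (metis imageI)
    qed
  qed
  have A_edges: "A \<subseteq> edges G" "insert e A \<subseteq> edges G" using A e by auto
  have ends_A: "\<forall>f\<in>A. ends H f = map_uprod \<mu> (ends G f)" using ends_H A edges_H unfolding \<mu>_def by auto
  have "ends_in_verts (spanning H A)" unfolding ends_in_verts_def
  proof
    fix f assume "f \<in> edges (spanning H A)"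
    then have f: "f \<in> A" by simp
    have "set_uprod (ends G f) \<subseteq> verts G" using ends_G f A_edges unfolding ends_in_verts_def by auto
    then show "set_uprod (ends (spanning H A) f) \<subseteq> verts (spanning H A)"
      using ends_A f image by (auto simp: uprod.set_map)
  qed
  then show ?thesis
  proof (rule num_components_map[OF ends_in_verts_spanning[OF ends_G A_edges(2)] _ image])
    fix p q assume pq: "p \<in> verts G" "q \<in> verts G"
    show "reach (spanning G (insert e A)) p q = reach (spanning H A) (\<mu> p) (\<mu> q)"
    proof
      assume "reach (spanning G (insert e A)) p q"
      then show "reach (spanning H A) (\<mu> p) (\<mu> q)"
        using reach_contraction_forward[OF ends_e uv u verts_H] ends_A unfolding \<mu>_def by blast
    next
      assume "reach (spanning H A) (\<mu> p) (\<mu> q)"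
      then show "reach (spanning G (insert e A)) p q"
        using reach_contraction_backward[OF ends_G ends_e e A_edges(1), of H, OF ends_A[unfolded \<mu>_def]] pq
        unfolding \<mu>_def by blast
    qed
  qed
qed

lemma flow_term_contraction:
  assumes G: "wf_graph G" and H: "is_contraction G e H" and A: "A \<subseteq> edges G - {e}"
    and x: "x \<noteq> 0"
  shows "flow_term G (insert e A) x = flow_term H A x"
proof -
  obtain u v where e: "e \<in> edges G" and ends_e: "ends G e = Upair u v"
    and verts_H: "verts H = verts G - {v}" and edges_H: "edges H = edges G - {e}"
    using H unfolding is_contraction_def by blast
  have v: "v \<in> verts G" using G e ends_e unfolding wf_graph_def by auto
  have fin: "finite (edges G)" "finite (verts G)" using G unfolding wf_graph_def by auto
  have "finite A" "e \<notin> A" using A fin finite_subset by auto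
  then have "card (insert e A) = Suc (card A)" by simp
  moreover have "card (edges G - insert e A) = card (edges H - A)"
    using card_diff_insert_Suc(2)[OF fin(1) e A] unfolding edges_H .
  moreover have "card (verts G) = Suc (card (verts H))"
    unfolding verts_H using card_Suc_Diff1[OF fin(2) v] by simp
  ultimately show ?thesis
    unfolding flow_term_def num_components_contraction[OF G H A] using x by simp
qed

lemma flow_sum_delcon:
  assumes G: "wf_graph G" and H1: "is_contraction G e H1" and H2: "is_deletion G e H2"
    and x: "x \<noteq> 0"
  shows "flow_sum G x = flow_sum H1 x - flow_sum H2 x"
proof -
  have e: "e \<in> edges G" and edges_H1: "edges H1 = edges G - {e}"
    using H1 unfolding is_contraction_def by auto
  have "(\<Sum>A\<in>Pow (edges G - {e}). flow_term G (insert e A) x) = flow_sum H1 x"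
    unfolding flow_sum_def edges_H1 using flow_term_contraction[OF G H1 _ x] by (auto intro: sum.cong)
  then show ?thesis
    unfolding flow_sum_split_edge[OF G e] sum_flow_term_deletion[OF G H2] by simp
qed

lemma is_disjoint_union_commute: "is_disjoint_union G G1 G2 \<Longrightarrow> is_disjoint_union G G2 G1"
  unfolding is_disjoint_union_def by blast

lemma disjoint_union_wf_graph:
  assumes "is_disjoint_union G G1 G2"
  shows "ends_in_verts G" "finite (verts G)" "finite (edges G)"
  using assms unfolding is_disjoint_union_def wf_graph_def ends_in_verts_def by fastforce+

lemma reach_disjoint_union:
  assumes U: "is_disjoint_union G G1 G2" and A: "A \<subseteq> edges G" and a: "a \<in> verts G1"
  shows "reach (spanning G A) a b \<longleftrightarrow> reach (spanning G1 (A \<inter> edges G1)) a b"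
proof
  assume r: "reach (spanning G A) a b"
  have "ends_in_verts (spanning G1 (A \<inter> edges G1))"
    using U wf_graph_ends_in_verts_spanning unfolding is_disjoint_union_def by blast
  moreover have "f \<in> edges G1 \<and> ends G1 f = ends G f"
    if "f \<in> A" "set_uprod (ends G f) \<inter> verts G1 \<noteq> {}" for f
  proof (cases "f \<in> edges G1")
    case False
    then have "f \<in> edges G2" using that(1) A U unfolding is_disjoint_union_def by blast
    then have "set_uprod (ends G f) \<subseteq> verts G2"
      using U unfolding is_disjoint_union_def wf_graph_def by auto
    then show ?thesis using that(2) U unfolding is_disjoint_union_def by blast
  qed (use U in \<open>auto simp: is_disjoint_union_def\<close>)
  ultimately show "reach (spanning G1 (A \<inter> edges G1)) a b"
    using reach_stays_in_closed_subgraph[OF r] a by auto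
next
  assume "reach (spanning G1 (A \<inter> edges G1)) a b"
  then show "reach (spanning G A) a b"
    by (rule reach_mono) (use U in \<open>auto simp: is_disjoint_union_def\<close>)
qed

lemma num_components_disjoint_union_insert:
  assumes U: "is_disjoint_union G G1 G2" and F: "F \<subseteq> edges G" and a: "a \<in> edges G1"
  shows "int (num_components G (insert a F)) - int (num_components G1 (insert a F \<inter> edges G1)) =
         int (num_components G F) - int (num_components G1 (F \<inter> edges G1))"
proof -
  have G1: "wf_graph G1" and a_G: "a \<in> edges G" and ends_a: "ends G a = ends G1 a"
    using U a unfolding is_disjoint_union_def by auto
  obtain p q where pq: "ends G1 a = Upair p q" by (cases "ends G1 a") auto
  have p: "p \<in> verts G1" using G1 a pq unfolding wf_graph_def by auto
  have fin1: "finite (verts G1)" using G1 unfolding wf_graph_def by blast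
  have "insert a F \<inter> edges G1 = insert a (F \<inter> edges G1)" using a by blast
  moreover note num_components_insert[OF disjoint_union_wf_graph(1)[OF U] F a_G pq[folded ends_a]
      disjoint_union_wf_graph(2)[OF U]]
  moreover note num_components_insert[OF wf_graph_ends_in_verts[OF G1] _ a pq fin1, of "F \<inter> edges G1"]
  ultimately show ?thesis using reach_disjoint_union[OF U F p] by simp
qed

lemma num_components_disjoint_union:
  assumes U: "is_disjoint_union G G1 G2" and A: "A \<subseteq> edges G"
  shows "num_components G A = num_components G1 (A \<inter> edges G1) + num_components G2 (A \<inter> edges G2)"
proof -
  have fin: "finite (verts G)" "finite (verts G1)" "finite (verts G2)" "finite (edges G)"
    and E: "edges G = edges G1 \<union> edges G2" "edges G1 \<inter> edges G2 = {}"
    using U disjoint_union_wf_graph[OF U] unfolding is_disjoint_union_def wf_graph_def by auto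
  have "finite A" using A fin(4) finite_subset by blast
  then have "int (num_components G A) =
      int (num_components G1 (A \<inter> edges G1)) + int (num_components G2 (A \<inter> edges G2))"
    using A
  proof (induction A rule: finite_subset_induct')
    case empty
    have "card (verts G) = card (verts G1) + card (verts G2)"
      using U card_Un_disjoint fin unfolding is_disjoint_union_def by metis
    then show ?case
      using num_components_no_edges[OF fin(1)] num_components_no_edges[OF fin(2)]
        num_components_no_edges[OF fin(3)] by simp
  next
    case (insert a F)
    have F: "F \<subseteq> edges G" using insert.hyps by blast
    consider "a \<in> edges G1" | "a \<in> edges G2" using insert.hyps E by blast
    then show ?case
    proof cases
      case 1
      then have "insert a F \<inter> edges G2 = F \<inter> edges G2" using E by blast
      then show ?thesis using num_components_disjoint_union_insert[OF U F 1] insert.IH by simp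
    next
      case 2
      then have "insert a F \<inter> edges G1 = F \<inter> edges G1" using E by blast
      then show ?thesis
        using num_components_disjoint_union_insert[OF is_disjoint_union_commute[OF U] F 2] insert.IH
        by simp
    qed
  qed
  then show ?thesis by linarith
qed

lemma flow_sum_disjoint_union:
  assumes U: "is_disjoint_union G G1 G2" and x: "x \<noteq> 0"
  shows "flow_sum G x = flow_sum G1 x * flow_sum G2 x"
proof -
  have fin: "finite (edges G1)" "finite (verts G1)" "finite (edges G2)" "finite (verts G2)"
    and V: "verts G = verts G1 \<union> verts G2" "verts G1 \<inter> verts G2 = {}"
    and E: "edges G = edges G1 \<union> edges G2" "edges G1 \<inter> edges G2 = {}"
    using U unfolding is_disjoint_union_def wf_graph_def by auto
  have product: "flow_term G (A1 \<union> A2) x = flow_term G1 A1 x * flow_term G2 A2 x"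
    if A: "A1 \<subseteq> edges G1" "A2 \<subseteq> edges G2" for A1 A2
  proof -
    have "A1 \<union> A2 \<subseteq> edges G" "(A1 \<union> A2) \<inter> edges G1 = A1" "(A1 \<union> A2) \<inter> edges G2 = A2"
      using A E by blast+
    then have k: "num_components G (A1 \<union> A2) = num_components G1 A1 + num_components G2 A2"
      using num_components_disjoint_union[OF U] by metis
    have "finite A1" "finite A2" "A1 \<inter> A2 = {}" using A fin E finite_subset by blast+
    then have c1: "card (A1 \<union> A2) = card A1 + card A2" by (rule card_Un_disjoint)
    have "edges G - (A1 \<union> A2) = (edges G1 - A1) \<union> (edges G2 - A2)" using A E by blast
    then have c2: "card (edges G - (A1 \<union> A2)) = card (edges G1 - A1) + card (edges G2 - A2)"
      using card_Un_disjoint[of "edges G1 - A1" "edges G2 - A2"] fin E by auto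
    have c3: "card (verts G) = card (verts G1) + card (verts G2)"
      unfolding V(1) using card_Un_disjoint[OF fin(2,4) V(2)] .
    show ?thesis unfolding flow_term_def k c1 c2 c3 using x by (simp add: power_add field_simps)
  qed
  have "flow_sum G x = (\<Sum>A1\<in>Pow (edges G1). \<Sum>A2\<in>Pow (edges G2). flow_term G (A1 \<union> A2) x)"
    unfolding flow_sum_def E(1) by (rule sum_Pow_Un[OF fin(1,3) E(2)])
  also have "\<dots> = (\<Sum>A1\<in>Pow (edges G1). \<Sum>A2\<in>Pow (edges G2). flow_term G1 A1 x * flow_term G2 A2 x)"
    using product by (auto intro!: sum.cong)
  also have "\<dots> = flow_sum G1 x * flow_sum G2 x" unfolding flow_sum_def by (simp add: sum_product)
  finally show ?thesis .
qed

section \<open>The flow polynomial\<close>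

lemma poly_flow_rel_eq_flow_sum: "flow_rel G p \<Longrightarrow> x \<noteq> 0 \<Longrightarrow> poly p x = flow_sum G x"
proof (induction rule: flow_rel.induct)
  case (empty G)
  then show ?case using flow_sum_no_edges by simp
next
  case (bridge G)
  then show ?case using flow_sum_bridge by simp
next
  case (union G G1 G2 p1 p2)
  then show ?case using flow_sum_disjoint_union[of G G1 G2 x] by simp
next
  case (loop G e H p)
  then show ?case using flow_sum_loop[of G e H x] by (simp add: algebra_simps)
next
  case (delcon G e H1 H2 p1 p2)
  then show ?case using flow_sum_delcon[of G e H1 H2 x] by simp
qed

lemma poly_eqI_nonzero:
  fixes p q :: "real poly"
  assumes "\<And>x. x \<noteq> 0 \<Longrightarrow> poly p x = poly q x"
  shows "p = q"
proof (rule ccontr)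
  assume "p \<noteq> q"
  then have "finite {x. poly (p - q) x = 0}" by (intro poly_roots_finite) simp
  moreover have "UNIV - {0} \<subseteq> {x. poly (p - q) x = 0}" using assms by auto
  ultimately have "finite (UNIV - {0::real})" using finite_subset by blast
  then show False using infinite_UNIV_char_0[where 'a=real] by simp
qed

lemma flow_rel_unique: "flow_rel G p \<Longrightarrow> flow_rel G q \<Longrightarrow> p = q"
  by (rule poly_eqI_nonzero) (simp add: poly_flow_rel_eq_flow_sum)

lemma is_deletion_del_edge:
  assumes "wf_graph G" "e \<in> edges G"
  shows "is_deletion G e (del_edge G e)" "wf_graph (del_edge G e)"
  using assms unfolding is_deletion_def del_edge_def wf_graph_def by auto

lemma contraction_exists:
  assumes G: "wf_graph G" and e: "e \<in> edges G" and "\<not> is_loop G e"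
  obtains H where "is_contraction G e H" "wf_graph H" "edges H = edges G - {e}"
proof -
  obtain a b where ab: "ends G e = Upair a b" by (cases "ends G e") auto
  have "a \<noteq> b" using assms(3) ab e unfolding is_loop_def by auto
  moreover have "a \<in> verts G" "b \<in> verts G" using G e ab unfolding wf_graph_def by auto
  moreover define H where "H = G\<lparr>verts := verts G - {b}, edges := edges G - {e},
    ends := (\<lambda>f. map_uprod (\<lambda>w. if w = b then a else w) (ends G f))\<rparr>"
  ultimately have "is_contraction G e H" "wf_graph H" "edges H = edges G - {e}"
    using e ab G unfolding is_contraction_def wf_graph_def by (auto simp: uprod.set_map)
  then show ?thesis by (rule that)
qed

lemma flow_rel_exists: "wf_graph G \<Longrightarrow> \<exists>p. flow_rel G p"
proof (induction "card (edges G)" arbitrary: G rule: less_induct)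
  case less
  note G = less.prems
  have fin: "finite (edges G)" using G unfolding wf_graph_def by auto
  show ?case
  proof (cases "edges G = {} \<or> has_bridge G")
    case True
    then show ?thesis using flow_rel.empty[OF G] flow_rel.bridge[OF G] by blast
  next
    case False
    then obtain e where e: "e \<in> edges G" and no_bridge: "\<not> has_bridge G" by blast
    have fewer: "card (edges G - {e}) < card (edges G)"
      using e fin by (meson card_Diff1_less)
    have H2: "is_deletion G e (del_edge G e)" "wf_graph (del_edge G e)"
      using is_deletion_del_edge[OF G e] by auto
    moreover have "edges (del_edge G e) = edges G - {e}" by (simp add: del_edge_def)
    ultimately obtain p2 where p2: "flow_rel (del_edge G e) p2"
      using less.hyps fewer by metis
    show ?thesis
    proof (cases "is_loop G e")
      case True
      then show ?thesis using flow_rel.loop[OF G True H2(1) p2] by blast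
    next
      case False
      then obtain H1 where H1: "is_contraction G e H1" "wf_graph H1" "edges H1 = edges G - {e}"
        using contraction_exists[OF G e] by blast
      then obtain p1 where "flow_rel H1 p1" using less.hyps fewer by metis
      then show ?thesis using flow_rel.delcon[OF G no_bridge e False H1(1) H2(1) _ p2] by blast
    qed
  qed
qed

lemma poly_flow_poly:
  assumes "wf_graph G" "x \<noteq> 0"
  shows "poly (flow_poly G) x = flow_sum G x"
proof -
  obtain p where p: "flow_rel G p" using flow_rel_exists[OF assms(1)] by blast
  then have "flow_poly G = p" unfolding flow_poly_def using flow_rel_unique by blast
  then show ?thesis using poly_flow_rel_eq_flow_sum[OF p assms(2)] by simp
qed

definition flow_sum_joining :: "('v, 'e) mgraph \<Rightarrow> 'v \<Rightarrow> 'v \<Rightarrow> real \<Rightarrow> real" where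
  "flow_sum_joining H a b x = (\<Sum>A\<in>Pow (edges H). if reach (spanning H A) a b then flow_term H A x else 0)"

lemma flow_sum_add_edge:
  assumes H: "wf_graph H" and e: "e \<notin> edges H" and ab: "a \<in> verts H" "b \<in> verts H"
    and x: "x \<noteq> 0"
  shows "flow_sum (add_edge H e a b) x = (x - 1) * flow_sum_joining H a b x"
proof -
  let ?H = "add_edge H e a b"
  have wf: "wf_graph ?H" using H ab unfolding wf_graph_def add_edge_def by auto
  have e': "e \<in> edges ?H" "ends ?H e = Upair a b" and edges_H: "edges ?H - {e} = edges H"
    using e by (auto simp: add_edge_def)
  have del: "is_deletion ?H e H" using e unfolding is_deletion_def add_edge_def by auto
  have insert_e: "flow_term ?H (insert e A) x =
      flow_term H A x + (x - 1) * (if reach (spanning H A) a b then flow_term H A x else 0)"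
    if A: "A \<subseteq> edges H" for A
  proof -
    have "ends ?H f = ends H f" if "f \<in> A" for f using that A e by (auto simp: add_edge_def)
    then have "reach (spanning ?H A) a b \<longleftrightarrow> reach (spanning H A) a b"
      using reach_mono[of "spanning ?H A" a b "spanning H A"] reach_mono[of "spanning H A" a b "spanning ?H A"]
      by (auto simp: add_edge_def)
    then show ?thesis
      using flow_term_insert[OF wf e' _ x, of A] flow_term_deletion[OF wf del, of A] A edges_H
      by (auto simp: algebra_simps)
  qed
  have "flow_sum ?H x = - flow_sum H x + (\<Sum>A\<in>Pow (edges H). flow_term ?H (insert e A) x)"
    using flow_sum_split_edge[OF wf e'(1)] sum_flow_term_deletion[OF wf del] unfolding edges_H by simp
  also have "(\<Sum>A\<in>Pow (edges H). flow_term ?H (insert e A) x) =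
      (\<Sum>A\<in>Pow (edges H). flow_term H A x + (x - 1) * (if reach (spanning H A) a b then flow_term H A x else 0))"
    using insert_e by (auto intro: sum.cong)
  also have "\<dots> = flow_sum H x + (x - 1) * flow_sum_joining H a b x"
    unfolding flow_sum_def flow_sum_joining_def sum.distrib sum_distrib_left ..
  finally show ?thesis by simp
qed

section \<open>Separations at two vertices\<close>

text \<open>Joining \<open>u, v\<close> and joining \<open>p, q\<close> in either order removes the same number of classes.\<close>
lemma merge_count_commute:
  fixes R :: "'a \<Rightarrow> 'a \<Rightarrow> bool"
  assumes sym: "\<And>x y. R x y \<Longrightarrow> R y x" and trans: "\<And>x y z. R x y \<Longrightarrow> R y z \<Longrightarrow> R x z"
  shows "(if R p q \<or> (R p u \<and> R v q) \<or> (R p v \<and> R u q) then 0 else 1) =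
    (if R p q then 0 else 1) - (if R u v \<or> (R u p \<and> R q v) \<or> (R u q \<and> R p v) then 1 else 0)
      + (if R u v then 1 else (0::int))"
proof (cases "R p q")
  case True
  then have "R u v \<or> (R u p \<and> R q v) \<or> (R u q \<and> R p v) \<longleftrightarrow> R u v" using sym trans by metis
  then show ?thesis using True by simp
next
  case pq: False
  show ?thesis
  proof (cases "R u v")
    case True
    then have "\<not> ((R p u \<and> R v q) \<or> (R p v \<and> R u q))" using sym trans pq by metis
    then show ?thesis using True pq by simp
  next
    case False
    have "(R p u \<and> R v q) \<or> (R p v \<and> R u q) \<longleftrightarrow> (R u p \<and> R q v) \<or> (R u q \<and> R p v)"
      using sym by metis
    then show ?thesis using False pq by auto
  qed
qed

locale two_separation =
  fixes G G1 G2 :: "('v, 'e) mgraph" and u v :: 'v and e0 :: 'e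
  assumes wf_G: "wf_graph G" and sub1: "is_subgraph G1 G" and sub2: "is_subgraph G2 G"
    and u_neq_v: "u \<noteq> v" and verts_Int: "verts G1 \<inter> verts G2 = {u, v}"
    and verts_Un: "verts G1 \<union> verts G2 = verts G"
    and edges_Int: "edges G1 \<inter> edges G2 = {}" and edges_Un: "edges G1 \<union> edges G2 = edges G"
    and e0: "e0 \<notin> edges G"
begin

lemma two_separation_commute: "two_separation G G2 G1 u v e0"
  using wf_G sub1 sub2 u_neq_v verts_Int verts_Un edges_Int edges_Un e0
  unfolding two_separation_def by blast

lemma wf_G1: "wf_graph G1" and wf_G2: "wf_graph G2"
  using sub1 sub2 unfolding is_subgraph_def by auto

lemma ends_G1: "f \<in> edges G1 \<Longrightarrow> ends G1 f = ends G f"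
  and ends_G2: "f \<in> edges G2 \<Longrightarrow> ends G2 f = ends G f"
  using sub1 sub2 unfolding is_subgraph_def by auto

lemma u_v_verts: "u \<in> verts G1" "v \<in> verts G1" "u \<in> verts G2" "v \<in> verts G2"
  using verts_Int by auto

lemma e0_notin_G1: "e0 \<notin> edges G1"
  using e0 edges_Un by auto

abbreviation "G1_uv \<equiv> add_edge G1 e0 u v"

lemma G1_uv_simps:
  "verts G1_uv = verts G1" "edges G1_uv = insert e0 (edges G1)" "ends G1_uv e0 = Upair u v"
  "f \<noteq> e0 \<Longrightarrow> ends G1_uv f = ends G1 f"
  unfolding add_edge_def by auto

lemma wf_G1_uv: "wf_graph G1_uv"
  using wf_G1 u_v_verts unfolding wf_graph_def add_edge_def by auto

lemma reach_G1_uv_iff: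
  assumes "B \<subseteq> edges G1"
  shows "reach (spanning G1_uv B) p q \<longleftrightarrow> reach (spanning G1 B) p q"
proof -
  have "f \<in> B \<Longrightarrow> ends G1_uv f = ends G1 f" for f
    using assms e0_notin_G1 G1_uv_simps(4) by (metis subsetD)
  then show ?thesis
    using reach_mono[of "spanning G1_uv B" p q "spanning G1 B"]
      reach_mono[of "spanning G1 B" p q "spanning G1_uv B"]
    by (auto simp: G1_uv_simps)
qed

text \<open>Between vertices of \<open>G1\<close>, the part of \<open>A\<close> inside \<open>G2\<close> only matters through whether
  it joins \<open>u\<close> to \<open>v\<close>, so it can be replaced by the single edge \<open>e0\<close>.\<close>
definition shadow :: "'e set \<Rightarrow> 'e set" where
  "shadow A = A \<inter> edges G1 \<union> (if reach (spanning G2 (A \<inter> edges G2)) u v then {e0} else {})"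

lemma shadow_subset: "shadow A \<subseteq> edges G1_uv"
  unfolding shadow_def G1_uv_simps by auto

lemma reach_shadow_through_G2:
  assumes w: "w \<in> verts G1"
    and "(reach (spanning G1_uv (shadow A)) x u \<and> reach (spanning G2 (A \<inter> edges G2)) u w) \<or>
      (reach (spanning G1_uv (shadow A)) x v \<and> reach (spanning G2 (A \<inter> edges G2)) v w)"
  shows "reach (spanning G1_uv (shadow A)) x w"
proof -
  define S where "S = reach (spanning G1_uv (shadow A))"
  define R2 where "R2 = reach (spanning G2 (A \<inter> edges G2))"
  have ends_S: "ends_in_verts (spanning G1_uv (shadow A))"
    using wf_graph_ends_in_verts_spanning[OF wf_G1_uv shadow_subset] .
  have ends_R2: "ends_in_verts (spanning G2 (A \<inter> edges G2))"
    using wf_graph_ends_in_verts_spanning[OF wf_G2] by blast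
  have S_uv: "S u v" if "R2 u v"
    using that reach.step[OF reach.refl[of u "spanning G1_uv (shadow A)"], of e0 v] u_v_verts
    unfolding S_def R2_def shadow_def by (simp add: G1_uv_simps)
  have S_vu: "S v u" if "R2 v u"
    using S_uv reach_sym[OF that[unfolded R2_def] ends_R2] reach_sym[OF _ ends_S]
    unfolding S_def R2_def by blast
  have w_cases: "w = u \<or> w = v" if "R2 p w" for p
    using that reach_end_in_verts[OF _ ends_R2] w verts_Int unfolding R2_def by auto
  from assms(2) have "S x w"
    unfolding S_def[symmetric] R2_def[symmetric]
  proof (elim disjE conjE)
    assume "S x u" "R2 u w"
    then show "S x w" using w_cases S_uv reach_trans unfolding S_def by metis
  next
    assume "S x v" "R2 v w"
    then show "S x w" using w_cases S_vu reach_trans unfolding S_def by metis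
  qed
  then show ?thesis unfolding S_def .
qed

lemma reach_shadow_forward:
  assumes A: "A \<subseteq> edges G" and r: "reach (spanning G A) a z"
  shows "a \<in> verts G1 \<longrightarrow> (z \<in> verts G1 \<and> reach (spanning G1_uv (shadow A)) a z) \<or>
    (reach (spanning G1_uv (shadow A)) a u \<and> reach (spanning G2 (A \<inter> edges G2)) u z) \<or>
    (reach (spanning G1_uv (shadow A)) a v \<and> reach (spanning G2 (A \<inter> edges G2)) v z)"
  using r
proof (induction rule: reach.induct)
  case (refl x)
  show ?case
    using reach.refl[of x "spanning G1_uv (shadow A)"] by (simp add: G1_uv_simps)
next
  case (step x y f z)
  define S where "S = reach (spanning G1_uv (shadow A))"
  define R2 where "R2 = reach (spanning G2 (A \<inter> edges G2))"
  show ?case unfolding S_def[symmetric] R2_def[symmetric]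
  proof
    assume "x \<in> verts G1"
    then have IH: "(y \<in> verts G1 \<and> S x y) \<or> (S x u \<and> R2 u y) \<or> (S x v \<and> R2 v y)"
      using step.IH unfolding S_def R2_def by blast
    have f: "f \<in> A" using step.hyps(2) by simp
    then consider "f \<in> edges G1" | "f \<in> edges G2" using A edges_Un by blast
    then show "(z \<in> verts G1 \<and> S x z) \<or> (S x u \<and> R2 u z) \<or> (S x v \<and> R2 v z)"
    proof cases
      case 1
      have yz: "ends G1 f = Upair y z" using ends_G1[OF 1] step.hyps(3) by simp
      then have yz_verts: "y \<in> verts G1" "z \<in> verts G1"
        using wf_G1 1 unfolding wf_graph_def by auto
      have "S x y" using IH reach_shadow_through_G2[OF yz_verts(1)] unfolding S_def R2_def by blast
      moreover have "f \<in> edges (spanning G1_uv (shadow A))" "ends (spanning G1_uv (shadow A)) f = Upair y z"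
        using 1 f yz e0_notin_G1 G1_uv_simps(4)[of f] unfolding shadow_def by auto
      ultimately have "S x z" using reach.step unfolding S_def by metis
      then show ?thesis using yz_verts by blast
    next
      case 2
      have yz: "ends G2 f = Upair y z" using ends_G2[OF 2] step.hyps(3) by simp
      then have "y \<in> verts G2" using wf_G2 2 unfolding wf_graph_def by auto
      then have "(S x u \<and> R2 u y) \<or> (S x v \<and> R2 v y)"
        using IH verts_Int reach.refl[of u "spanning G2 (A \<inter> edges G2)"]
          reach.refl[of v "spanning G2 (A \<inter> edges G2)"] u_v_verts unfolding R2_def by auto
      moreover have "f \<in> edges (spanning G2 (A \<inter> edges G2))"
        "ends (spanning G2 (A \<inter> edges G2)) f = Upair y z"
        using 2 f yz by auto
      ultimately show ?thesis using reach.step unfolding R2_def by metis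
    qed
  qed
qed

lemma reach_shadow_backward:
  assumes A: "A \<subseteq> edges G" and r: "reach (spanning G1_uv (shadow A)) a b"
  shows "reach (spanning G A) a b"
  using r
proof (induction rule: reach.induct)
  case (refl x)
  then have "x \<in> verts G" using verts_Un by (auto simp: G1_uv_simps)
  then show ?case by (intro reach.refl) simp
next
  case (step x y f z)
  show ?case
  proof (cases "f = e0")
    case True
    then have "reach (spanning G2 (A \<inter> edges G2)) u v"
      using step.hyps(2) e0_notin_G1 unfolding shadow_def by (auto split: if_splits)
    then have u_v: "reach (spanning G A) u v"
      by (rule reach_mono) (use verts_Un ends_G2 in auto)
    have v_u: "reach (spanning G A) v u"
      using reach_sym[OF u_v ends_in_verts_spanning[OF wf_graph_ends_in_verts[OF wf_G] A]] .
    have "Upair y z = Upair u v" using step.hyps(3) True G1_uv_simps(3) by (simp del: Upair_inject)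
    then have "reach (spanning G A) y z" using u_v v_u by auto
    then show ?thesis using step.IH by (rule reach_trans)
  next
    case False
    then have "f \<in> A" "f \<in> edges G1" using step.hyps(2) unfolding shadow_def by (auto split: if_splits)
    moreover have "ends G f = Upair y z"
      using step.hyps(3) G1_uv_simps(4)[OF False] ends_G1[OF \<open>f \<in> edges G1\<close>] by simp
    ultimately show ?thesis using reach.step[OF step.IH, of f z] by simp
  qed
qed

lemma reach_iff_reach_shadow:
  assumes "A \<subseteq> edges G" "a \<in> verts G1" "b \<in> verts G1"
  shows "reach (spanning G A) a b \<longleftrightarrow> reach (spanning G1_uv (shadow A)) a b"
  using reach_shadow_forward[OF assms(1), of a b] reach_shadow_through_G2[OF assms(3)]
    reach_shadow_backward[OF assms(1)] assms(2)
  by blast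

definition joins_both :: "'e set \<Rightarrow> bool" where
  "joins_both A \<longleftrightarrow> reach (spanning G1 (A \<inter> edges G1)) u v \<and> reach (spanning G2 (A \<inter> edges G2)) u v"

lemma joins_both_commute: "two_separation.joins_both G2 G1 u v = joins_both"
  by (auto simp: joins_both_def two_separation.joins_both_def[OF two_separation_commute])

lemma num_components_split_insert:
  assumes F: "F \<subseteq> edges G" and a: "a \<in> edges G1"
  shows "int (num_components G (insert a F)) - int (num_components G1 (insert a F \<inter> edges G1))
      - of_bool (joins_both (insert a F))
    = int (num_components G F) - int (num_components G1 (F \<inter> edges G1)) - of_bool (joins_both F)"
proof -
  obtain p q where pq: "ends G1 a = Upair p q" by (cases "ends G1 a") auto
  have pq_verts: "p \<in> verts G1" "q \<in> verts G1" using wf_G1 a pq unfolding wf_graph_def by auto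
  have fin: "finite (verts G)" "finite (verts G1)" using wf_G wf_G1 unfolding wf_graph_def by auto
  have a_G: "a \<in> edges G" using a edges_Un by blast
  have F2: "insert a F \<inter> edges G2 = F \<inter> edges G2" using a edges_Int by blast
  have F1: "insert a F \<inter> edges G1 = insert a (F \<inter> edges G1)" using a by blast
  define R1 where "R1 = reach (spanning G1 (F \<inter> edges G1))"
  have ends_R1: "ends_in_verts (spanning G1 (F \<inter> edges G1))"
    using wf_graph_ends_in_verts_spanning[OF wf_G1] by blast
  have sym: "R1 x y \<Longrightarrow> R1 y x" for x y unfolding R1_def using reach_sym[OF _ ends_R1] .
  have trans: "R1 x y \<Longrightarrow> R1 y z \<Longrightarrow> R1 x z" for x y z unfolding R1_def using reach_trans by metis
  have k: "int (num_components G (insert a F)) =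
      int (num_components G F) - (if reach (spanning G F) p q then 0 else 1)"
    using num_components_insert[OF wf_graph_ends_in_verts[OF wf_G] F a_G _ fin(1)] ends_G1[OF a] pq
    by simp
  have k1: "int (num_components G1 (insert a (F \<inter> edges G1))) =
      int (num_components G1 (F \<inter> edges G1)) - (if R1 p q then 0 else 1)"
    unfolding R1_def by (rule num_components_insert[OF wf_graph_ends_in_verts[OF wf_G1] _ a pq fin(2)]) blast
  have joins1: "reach (spanning G1 (insert a (F \<inter> edges G1))) u v \<longleftrightarrow>
      R1 u v \<or> (R1 u p \<and> R1 q v) \<or> (R1 u q \<and> R1 p v)"
    unfolding R1_def by (rule reach_spanning_insert[OF ends_R1 pq pq_verts])
  have shadow_R1: "reach (spanning G1_uv (F \<inter> edges G1)) x y \<longleftrightarrow> R1 x y" for x y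
    unfolding R1_def by (rule reach_G1_uv_iff) blast
  have reach_G: "reach (spanning G F) p q \<longleftrightarrow> reach (spanning G1_uv (shadow F)) p q"
    by (rule reach_iff_reach_shadow[OF F pq_verts])
  show ?thesis
  proof (cases "reach (spanning G2 (F \<inter> edges G2)) u v")
    case True
    have ends_shadow: "ends_in_verts (spanning G1_uv (F \<inter> edges G1))"
      using wf_graph_ends_in_verts_spanning[OF wf_G1_uv] G1_uv_simps(2) by blast
    have "shadow F = insert e0 (F \<inter> edges G1)" unfolding shadow_def using True by auto
    then have "reach (spanning G F) p q \<longleftrightarrow> R1 p q \<or> (R1 p u \<and> R1 v q) \<or> (R1 p v \<and> R1 u q)"
      unfolding reach_G shadow_R1[symmetric]
      using reach_spanning_insert[OF ends_shadow G1_uv_simps(3)] u_v_verts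
      by (simp add: spanning_def G1_uv_simps)
    then show ?thesis
      unfolding F1 F2 k k1 joins_both_def joins1 R1_def[symmetric]
      using True merge_count_commute[where R = R1 and p = p and q = q and u = u and v = v, OF sym trans] by simp
  next
    case False
    then have "shadow F = F \<inter> edges G1" unfolding shadow_def by auto
    then have "reach (spanning G F) p q \<longleftrightarrow> R1 p q" unfolding reach_G by (simp add: shadow_R1)
    then show ?thesis unfolding F1 F2 k k1 joins_both_def R1_def[symmetric] using False by simp
  qed
qed

lemma num_components_split:
  assumes A: "A \<subseteq> edges G"
  shows "int (num_components G A) + 2 =
    int (num_components G1 (A \<inter> edges G1)) + int (num_components G2 (A \<inter> edges G2))
      + of_bool (joins_both A)"
proof -
  have "finite A" using A wf_G finite_subset unfolding wf_graph_def by blast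
  then show ?thesis using A
  proof (induction A rule: finite_subset_induct')
    case empty
    have fin: "finite (verts G)" "finite (verts G1)" "finite (verts G2)"
      using wf_G wf_G1 wf_G2 unfolding wf_graph_def by blast+
    have "card (verts G1) + card (verts G2) = card (verts G) + 2"
      using card_Un_Int[OF fin(2,3)] verts_Un verts_Int u_neq_v by simp
    moreover have "\<not> joins_both {}" using u_neq_v by (simp add: joins_both_def reach_spanning_no_edges)
    ultimately show ?case
      using num_components_no_edges[OF fin(1)] num_components_no_edges[OF fin(2)]
        num_components_no_edges[OF fin(3)] by simp
  next
    case (insert a F)
    consider "a \<in> edges G1" | "a \<in> edges G2" using insert.hyps edges_Un by blast
    then show ?case
    proof cases
      case 1
      have F2: "insert a F \<inter> edges G2 = F \<inter> edges G2" using 1 edges_Int by blast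
      show ?thesis
        using num_components_split_insert[OF insert.hyps(3) 1] insert.IH unfolding F2 by linarith
    next
      case 2
      have F1: "insert a F \<inter> edges G1 = F \<inter> edges G1" using 2 edges_Int by blast
      show ?thesis
        using two_separation.num_components_split_insert[OF two_separation_commute insert.hyps(3) 2]
          insert.IH
        unfolding joins_both_commute F1 by linarith
    qed
  qed
qed

lemma flow_term_split:
  assumes x: "x \<noteq> 0" and A: "A1 \<subseteq> edges G1" "A2 \<subseteq> edges G2"
  shows "flow_term G (A1 \<union> A2) x =
    flow_term G1 A1 x * flow_term G2 A2 x * (if joins_both (A1 \<union> A2) then x else 1)"
proof -
  have fin: "finite (edges G1)" "finite (verts G1)" "finite (edges G2)" "finite (verts G2)"
    using wf_G1 wf_G2 unfolding wf_graph_def by auto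
  have "A1 \<union> A2 \<subseteq> edges G" "(A1 \<union> A2) \<inter> edges G1 = A1" "(A1 \<union> A2) \<inter> edges G2 = A2"
    using A edges_Un edges_Int by blast+
  then have "int (num_components G (A1 \<union> A2)) + 2 =
      int (num_components G1 A1) + int (num_components G2 A2) + of_bool (joins_both (A1 \<union> A2))"
    using num_components_split by metis
  then have k: "num_components G (A1 \<union> A2) + 2 =
      num_components G1 A1 + num_components G2 A2 + of_bool (joins_both (A1 \<union> A2))"
    by (cases "joins_both (A1 \<union> A2)") simp_all
  have "finite A1" "finite A2" "A1 \<inter> A2 = {}" using A fin edges_Int finite_subset by blast+
  then have c1: "card (A1 \<union> A2) = card A1 + card A2" by (rule card_Un_disjoint)
  have "edges G - (A1 \<union> A2) = (edges G1 - A1) \<union> (edges G2 - A2)" using A edges_Un edges_Int by blast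
  then have c2: "card (edges G - (A1 \<union> A2)) = card (edges G1 - A1) + card (edges G2 - A2)"
    using card_Un_disjoint[of "edges G1 - A1" "edges G2 - A2"] fin edges_Int by auto
  have c3: "card (verts G) + 2 = card (verts G1) + card (verts G2)"
    using card_Un_Int[OF fin(2,4)] verts_Un verts_Int u_neq_v by simp
  have "flow_term G (A1 \<union> A2) x = (-1) ^ card (edges G - (A1 \<union> A2)) * x ^ card (A1 \<union> A2) *
      (x ^ (num_components G (A1 \<union> A2) + 2) / x ^ (card (verts G) + 2))"
    unfolding flow_term_def using x by (simp add: power_add)
  also have "\<dots> = (-1) ^ (card (edges G1 - A1) + card (edges G2 - A2)) * x ^ (card A1 + card A2) *
      (x ^ (num_components G1 A1 + num_components G2 A2 + of_bool (joins_both (A1 \<union> A2))) /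
        x ^ (card (verts G1) + card (verts G2)))"
    unfolding k c1 c2 c3 ..
  also have "\<dots> = flow_term G1 A1 x * flow_term G2 A2 x * (if joins_both (A1 \<union> A2) then x else 1)"
    unfolding flow_term_def using x by (simp add: power_add field_simps)
  finally show ?thesis .
qed

lemma flow_sum_split:
  assumes x: "x \<noteq> 0"
  shows "flow_sum G x =
    flow_sum G1 x * flow_sum G2 x + (x - 1) * flow_sum_joining G1 u v x * flow_sum_joining G2 u v x"
proof -
  have fin: "finite (edges G1)" "finite (edges G2)" using wf_G1 wf_G2 unfolding wf_graph_def by auto
  have split: "flow_term G (A1 \<union> A2) x = flow_term G1 A1 x * flow_term G2 A2 x +
      (x - 1) * ((if reach (spanning G1 A1) u v then flow_term G1 A1 x else 0) *
        (if reach (spanning G2 A2) u v then flow_term G2 A2 x else 0))"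
    if A: "A1 \<subseteq> edges G1" "A2 \<subseteq> edges G2" for A1 A2
  proof -
    have "(A1 \<union> A2) \<inter> edges G1 = A1" "(A1 \<union> A2) \<inter> edges G2 = A2" using A edges_Int by blast+
    then show ?thesis unfolding flow_term_split[OF x A] joins_both_def by (simp add: algebra_simps)
  qed
  have "flow_sum G x = (\<Sum>A1\<in>Pow (edges G1). \<Sum>A2\<in>Pow (edges G2). flow_term G (A1 \<union> A2) x)"
    unfolding flow_sum_def edges_Un[symmetric] by (rule sum_Pow_Un[OF fin edges_Int])
  also have "\<dots> = (\<Sum>A1\<in>Pow (edges G1). \<Sum>A2\<in>Pow (edges G2). flow_term G1 A1 x * flow_term G2 A2 x +
      (x - 1) * ((if reach (spanning G1 A1) u v then flow_term G1 A1 x else 0) *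
        (if reach (spanning G2 A2) u v then flow_term G2 A2 x else 0)))"
    using split by (auto intro!: sum.cong)
  also have "\<dots> = flow_sum G1 x * flow_sum G2 x + (x - 1) * flow_sum_joining G1 u v x * flow_sum_joining G2 u v x"
    unfolding flow_sum_def flow_sum_joining_def sum.distrib sum_product sum_distrib_left[symmetric]
      mult.assoc ..
  finally show ?thesis .
qed

lemma flow_poly_split:
  "[:-1, 1:] * flow_poly G =
    flow_poly (add_edge G1 e0 u v) * flow_poly (add_edge G2 e0 u v) + [:-1, 1:] * flow_poly G1 * flow_poly G2"
proof (rule poly_eqI_nonzero)
  fix x :: real assume x: "x \<noteq> 0"
  have wf: "wf_graph (add_edge G1 e0 u v)" "wf_graph (add_edge G2 e0 u v)"
    using wf_G1_uv two_separation.wf_G1_uv[OF two_separation_commute] .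
  have joining: "flow_sum (add_edge G1 e0 u v) x = (x - 1) * flow_sum_joining G1 u v x"
    "flow_sum (add_edge G2 e0 u v) x = (x - 1) * flow_sum_joining G2 u v x"
    using flow_sum_add_edge[OF wf_G1 e0_notin_G1 _ _ x]
      flow_sum_add_edge[OF wf_G2 two_separation.e0_notin_G1[OF two_separation_commute] _ _ x]
      u_v_verts by simp_all
  have "poly ([:-1, 1:] * flow_poly G) x = (x - 1) * flow_sum G x"
    by (simp add: poly_flow_poly[OF wf_G x] algebra_simps)
  also have "\<dots> = ((x - 1) * flow_sum_joining G1 u v x) * ((x - 1) * flow_sum_joining G2 u v x)
      + (x - 1) * flow_sum G1 x * flow_sum G2 x"
    unfolding flow_sum_split[OF x] by (simp add: algebra_simps)
  also have "\<dots> = poly (flow_poly (add_edge G1 e0 u v) * flow_poly (add_edge G2 e0 u v)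
      + [:-1, 1:] * flow_poly G1 * flow_poly G2) x"
    unfolding joining[symmetric] by (simp add: poly_flow_poly wf wf_G1 wf_G2 x algebra_simps)
  finally show "poly ([:-1, 1:] * flow_poly G) x = poly (flow_poly (add_edge G1 e0 u v) *
      flow_poly (add_edge G2 e0 u v) + [:-1, 1:] * flow_poly G1 * flow_poly G2) x" .
qed

end

theorem lemma2p6:
  fixes G G1 G2 :: "('v, 'e) mgraph" and u v :: 'v and e0 :: 'e and lam :: real
  assumes "wf_graph G" and "non_separable G"
    and "is_subgraph G1 G" and "is_subgraph G2 G"
    and "u \<noteq> v" and "verts G1 \<inter> verts G2 = {u, v}"
    and "verts G1 \<union> verts G2 = verts G"
    and "edges G1 \<inter> edges G2 = {}" and "edges G1 \<union> edges G2 = edges G"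
    and "e0 \<notin> edges G"
    and "lam \<noteq> 1"
  shows "poly (flow_poly G) lam =
           poly (flow_poly (add_edge G1 e0 u v)) lam * poly (flow_poly (add_edge G2 e0 u v)) lam
             / (lam - 1)
           + poly (flow_poly G1) lam * poly (flow_poly G2) lam"
proof -
  interpret two_separation G G1 G2 u v e0
    using assms unfolding two_separation_def by blast
  have "(lam - 1) * poly (flow_poly G) lam =
      poly (flow_poly (add_edge G1 e0 u v)) lam * poly (flow_poly (add_edge G2 e0 u v)) lam
      + (lam - 1) * (poly (flow_poly G1) lam * poly (flow_poly G2) lam)"
    using arg_cong[OF flow_poly_split, of "\<lambda>p. poly p lam"] by (simp add: algebra_simps)
  then show ?thesis using \<open>lam \<noteq> 1\<close> by (simp add: field_simps)
qed

end
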